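(* Let $(\Omega,\mathcal{F},P)$ be a probability space and let $(\mathcal{F}_n)_{n\ge 1}$ be an increasing sequence of sub-$\sigma$-algebras of $\mathcal{F}$. For $n=1,2,\dots$ let $X_n$ be an $\mathcal{F}_n$-measurable real-valued random variable, let $T_n:\mathbb{R}^n\to\mathbb{R}$ be a Borel measurable function, and let $W_n$ be an $\mathcal{F}_{n+1}$-measurable real-valued random variable such that $$X_{n+1}=T_n(X_1,\dots,X_n)+W_n .$$ Assume $\mathbb{E}[W_n\mid\mathcal{F}_n]=0$ almost surely for every $n$, and $\sum_{n=1}^\infty \mathbb{E}[W_n^2]<\infty$. Let $(\alpha_n),(\beta_n),(\gamma_n)$ be sequences of real numbers with $\alpha_n\ge0$, $\beta_n\ge0$, $\gamma_n\ge0$, $\lim_{n\to\infty}\alpha_n=0$, $\sum_{n=1}^\infty\beta_n<\infty$ and $\sum_{n=1}^\infty\gamma_n=\infty$. Suppose there is a point $x_*\in\mathbb{R}$ such that for all $n\ge1$ and all $x_1,\dots,x_n\in\mathbb{R}$, $$|T_n(x_1,\dots,x_n)-x_*|\le\max\big(\alpha_n,\,(1+\beta_n)|x_n-x_*|-\gamma_n\big).$$ Then $X_n\to x_*$ almost surely, i.e. $P\{\lim_{n\to\infty}X_n=x_*\}=1$.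
   Context: $\mathbb{E}[\,\cdot\mid\mathcal{F}_n]$ denotes conditional expectation with respect to the sub-$\sigma$-algebra $\mathcal{F}_n$. *)

theory Defs
  imports "HOL-Probability.Probability"
begin

end

theory Submission
  imports Defs
begin

text \<open>Replace \<open>|z|\<close> by the smooth convex proxy \<open>smooth_abs z = sqrt (1 + z\<^sup>2)\<close>, whose slope
  is bounded by \<open>1\<close> and whose second derivative is at most \<open>1\<close>. A second-order expansion of
  \<open>smooth_abs (X (n+1) - x\<^sub>*)\<close> around \<open>T\<^sub>n - x\<^sub>*\<close> splits the noise into a martingale
  transform of \<open>W\<close> with predictable multipliers bounded by \<open>1\<close>, which converges almost surely
  by Kolmogorov's maximal inequality, and the almost surely summable \<open>W\<^sub>n\<^sup>2 / 2\<close>.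
  Pathwise, \<open>q\<^sub>n = smooth_abs (X\<^sub>n - x\<^sub>*) - 1\<close> then obeys a deterministic recursion with
  summable perturbation, growth factor \<open>1 + \<beta>\<^sub>n\<close> and, by convexity, a decrease proportional to
  \<open>\<gamma>\<^sub>n\<close> whenever \<open>q\<^sub>n\<close> is not small; as \<open>\<Sum> \<gamma>\<^sub>n = \<infinity>\<close>, this forces \<open>q\<^sub>n \<rightarrow> 0\<close>.\<close>

lemma suminf_minus_sum_LIMSEQ:
  fixes g :: "nat \<Rightarrow> real"
  assumes "summable g"
  shows "(\<lambda>n. suminf g - sum g {..<n}) \<longlonglongrightarrow> 0"
  using tendsto_diff[OF tendsto_const[of "suminf g"] summable_LIMSEQ[OF assms]] by simp

lemma multiplicative_growth_le_exp_suminf: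
  fixes p \<beta> :: "nat \<Rightarrow> real"
  assumes p: "\<And>n. p n \<ge> 0" and \<beta>: "\<And>n. \<beta> n \<ge> 0" "summable \<beta>"
    and growth: "\<And>n. p (Suc n) \<le> (1 + \<beta> n) * p n"
  shows "p n \<le> p 0 * exp (suminf \<beta>)"
proof -
  have "p n \<le> p 0 * exp (sum \<beta> {..<n})"
  proof (induction n)
    case (Suc n)
    have "p (Suc n) \<le> (1 + \<beta> n) * p n" by (rule growth)
    also have "\<dots> \<le> exp (\<beta> n) * (p 0 * exp (sum \<beta> {..<n}))"
      using Suc.IH \<beta>(1)[of n] p[of n] by (intro mult_mono) (auto simp: exp_ge_add_one_self)
    also have "\<dots> = p 0 * exp (sum \<beta> {..<Suc n})" by (simp add: exp_add)
    finally show ?case .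
  qed simp
  also have "\<dots> \<le> p 0 * exp (suminf \<beta>)"
    using p[of 0] sum_le_suminf[OF \<beta>(2), of "{..<n}"] \<beta>(1) by (intro mult_left_mono) auto
  finally show ?thesis .
qed

text \<open>The noise is absorbed into the summable tail \<open>G\<close>; then \<open>max (2K) (q + G + K)\<close>
  grows at most by the factors \<open>1 + \<beta> n\<close>.\<close>

lemma perturbed_recursion_bounded:
  fixes q a \<beta> g :: "nat \<Rightarrow> real"
  assumes a: "a \<longlonglongrightarrow> 0" and \<beta>: "\<And>n. \<beta> n \<ge> 0" "summable \<beta>" and g: "summable g"
    and step: "\<And>n. q (Suc n) \<le> g n + max (a n) (max 1 ((1 + \<beta> n) * q n + \<beta> n))"
  shows "\<exists>Q. \<forall>n. q n \<le> Q"
proof -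
  define G where "G n = suminf g - sum g {..<n}" for n
  have G_Suc: "G n = g n + G (Suc n)" for n unfolding G_def by simp
  obtain C1 where C1: "\<And>n. \<bar>G n\<bar> \<le> C1"
    using convergent_imp_Bseq[OF convergentI[OF suminf_minus_sum_LIMSEQ[OF g]]] unfolding G_def
    by (metis BseqE less_eq_real_def real_norm_def)
  obtain C2 where C2: "\<And>n. \<bar>a n\<bar> \<le> C2"
    using convergent_imp_Bseq[OF convergentI[OF a]] by (metis BseqE less_eq_real_def real_norm_def)
  define K where "K = C1 + C2 + 1"
  have "C1 \<ge> 0" "C2 \<ge> 0" using C1[of 0] C2[of 0] by auto
  then have K: "K > 0" "G n + a n \<le> K" "G n + 1 \<le> K" "1 - G n \<le> K" for n
    using C1[of n] C2[of n] unfolding K_def by (auto simp: abs_le_iff)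
  define p where "p n = max (2 * K) (q n + G n + K)" for n
  have "p (Suc n) \<le> (1 + \<beta> n) * p n" for n
  proof -
    have two_K: "2 * K \<le> (1 + \<beta> n) * p n"
    proof -
      have "2 * K \<le> (1 + \<beta> n) * (2 * K)" using \<beta>(1)[of n] K(1) by simp
      also have "\<dots> \<le> (1 + \<beta> n) * p n" using \<beta>(1)[of n] unfolding p_def by simp
      finally show ?thesis .
    qed
    have "\<beta> n * (1 - G n) \<le> \<beta> n * K" using K(4)[of n] \<beta>(1)[of n] by (rule mult_left_mono)
    then have "q (Suc n) + G (Suc n) \<le> max K ((1 + \<beta> n) * (q n + G n) + \<beta> n * K)"
      using step[of n] G_Suc[of n] K(2,3)[of n] by (auto simp: algebra_simps)
    then have "q (Suc n) + G (Suc n) + K \<le> max (2 * K) ((1 + \<beta> n) * (q n + G n + K))"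
      by (simp add: algebra_simps)
    also have "\<dots> \<le> (1 + \<beta> n) * p n"
      using two_K \<beta>(1)[of n] unfolding p_def by simp
    finally show ?thesis using two_K unfolding p_def[of "Suc n"] by simp
  qed
  then have "p n \<le> p 0 * exp (suminf \<beta>)" for n
    using K(1) \<beta> by (intro multiplicative_growth_le_exp_suminf) (auto simp: p_def)
  then have "q n \<le> p 0 * exp (suminf \<beta>) + C1" for n
    using C1[of n] max.cobounded2[of "q n + G n + K" "2 * K"] K(1) unfolding p_def
    by (smt (verit))
  then show ?thesis by blast
qed

lemma eventually_le_of_descent:
  fixes w \<gamma> :: "nat \<Rightarrow> real"
  assumes \<kappa>: "\<kappa> > 0" and \<gamma>: "\<And>n. \<gamma> n \<ge> 0"
    and \<gamma>_div: "filterlim (\<lambda>N. \<Sum>n<N. \<gamma> n) at_top sequentially"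
    and lower: "eventually (\<lambda>n. w n \<ge> L) sequentially"
    and descent: "eventually (\<lambda>n. w (Suc n) \<le> max C (w n - \<gamma> n * \<kappa>)) sequentially"
  shows "eventually (\<lambda>n. w n \<le> C) sequentially"
proof -
  obtain N where N: "\<And>n. n \<ge> N \<Longrightarrow> w n \<ge> L \<and> w (Suc n) \<le> max C (w n - \<gamma> n * \<kappa>)"
    using eventually_conj[OF lower descent] unfolding eventually_sequentially by blast
  have "\<exists>n0\<ge>N. w n0 \<le> C"
  proof (rule ccontr)
    assume "\<not> ?thesis"
    then have above: "\<And>n. n \<ge> N \<Longrightarrow> w n > C" by force
    have decrease: "w (N + k) \<le> w N - \<kappa> * (\<Sum>n<N + k. \<gamma> n) + \<kappa> * (\<Sum>n<N. \<gamma> n)" for k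
    proof (induction k)
      case (Suc k)
      have "w (Suc (N + k)) \<le> w (N + k) - \<gamma> (N + k) * \<kappa>"
        using N[of "N + k"] above[of "Suc (N + k)"] by auto
      then show ?case using Suc.IH by (simp add: algebra_simps)
    qed simp
    obtain k where "(\<Sum>n<N + k. \<gamma> n) \<ge> (w N - L) / \<kappa> + (\<Sum>n<N. \<gamma> n) + 1"
      using \<gamma>_div unfolding filterlim_at_top eventually_sequentially
      by (metis add.commute le_add2)
    then have "\<kappa> * (\<Sum>n<N + k. \<gamma> n) \<ge> w N - L + \<kappa> * (\<Sum>n<N. \<gamma> n) + \<kappa>"
      using \<kappa> by (simp add: field_simps)
    with decrease[of k] N[of "N + k"] \<kappa> show False by simp
  qed
  then obtain n0 where n0: "n0 \<ge> N" "w n0 \<le> C" by blast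
  have "w (n0 + k) \<le> C" for k
  proof (induction k)
    case (Suc k)
    have "\<gamma> (n0 + k) * \<kappa> \<ge> 0" using \<gamma> \<kappa> by simp
    then show ?case using N[of "n0 + k"] n0(1) Suc.IH by auto
  qed (simp add: n0)
  then show ?thesis
    unfolding eventually_sequentially by (metis le_add_diff_inverse)
qed

text \<open>\<open>\<kappa>\<close> may depend on \<open>\<epsilon>\<close>: the contraction \<open>\<gamma> n\<close> is only required to act on values
  of \<open>q\<close> above \<open>\<epsilon>\<close>.\<close>

lemma perturbed_descent_tendsto_zero:
  fixes q a \<gamma> g :: "nat \<Rightarrow> real"
  assumes q: "\<And>n. q n \<ge> 0" and a: "a \<longlonglongrightarrow> 0"
    and \<gamma>: "\<And>n. \<gamma> n \<ge> 0" "filterlim (\<lambda>N. \<Sum>n<N. \<gamma> n) at_top sequentially"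
    and g: "summable g"
    and step: "\<And>\<epsilon>. \<epsilon> > 0 \<Longrightarrow> \<exists>\<kappa>>0. \<forall>n. q (Suc n) \<le> g n + max (a n) (max \<epsilon> (q n - \<gamma> n * \<kappa>))"
  shows "q \<longlonglongrightarrow> 0"
proof (rule tendstoI)
  fix e :: real assume "e > 0"
  define \<epsilon> where "\<epsilon> = e / 4"
  have "\<epsilon> > 0" using \<open>e > 0\<close> unfolding \<epsilon>_def by simp
  then obtain \<kappa> where "\<kappa> > 0" and step_\<epsilon>: "\<And>n. q (Suc n) \<le> g n + max (a n) (max \<epsilon> (q n - \<gamma> n * \<kappa>))"
    using step by blast
  define G where "G n = suminf g - sum g {..<n}" for n
  have G_Suc: "G n = g n + G (Suc n)" for n unfolding G_def by simp
  have "eventually (\<lambda>n. \<bar>a n\<bar> < \<epsilon>) sequentially" "eventually (\<lambda>n. \<bar>G n\<bar> < \<epsilon>) sequentially"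
    using a suminf_minus_sum_LIMSEQ[OF g] \<open>\<epsilon> > 0\<close> unfolding G_def by (simp_all add: tendsto_iff dist_real_def)
  then have small: "eventually (\<lambda>n. \<bar>a n\<bar> < \<epsilon> \<and> \<bar>G n\<bar> < \<epsilon>) sequentially"
    by eventually_elim auto
  have "eventually (\<lambda>n. q (Suc n) + G (Suc n) \<le> max (2 * \<epsilon>) (q n + G n - \<gamma> n * \<kappa>)) sequentially"
    using small
  proof eventually_elim
    case (elim n)
    then have "G n + a n \<le> 2 * \<epsilon>" "G n + \<epsilon> \<le> 2 * \<epsilon>" by auto
    moreover have "q (Suc n) + G (Suc n) \<le> G n + max (a n) (max \<epsilon> (q n - \<gamma> n * \<kappa>))"
      using step_\<epsilon>[of n] G_Suc[of n] by simp
    ultimately show ?case by linarith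
  qed
  moreover have "eventually (\<lambda>n. q n + G n \<ge> - \<epsilon>) sequentially"
    using small
  proof eventually_elim
    case (elim n)
    then show ?case using q[of n] by linarith
  qed
  ultimately have "eventually (\<lambda>n. q n + G n \<le> 2 * \<epsilon>) sequentially"
    by (rule eventually_le_of_descent[OF \<open>\<kappa> > 0\<close> \<gamma>, rotated])
  then show "eventually (\<lambda>n. dist (q n) 0 < e) sequentially"
    using small
  proof eventually_elim
    case (elim n)
    then show ?case using q[of n] unfolding \<epsilon>_def by auto
  qed
qed

text \<open>A bound on \<open>q\<close> turns the relative perturbation \<open>\<beta> n * (q n + 1)\<close> into a summable one.\<close>

lemma perturbed_recursion_tendsto_zero:
  fixes q a \<beta> \<gamma> g :: "nat \<Rightarrow> real"
  assumes q: "\<And>n. q n \<ge> 0"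
    and a: "a \<longlonglongrightarrow> 0" and \<beta>: "\<And>n. \<beta> n \<ge> 0" "summable \<beta>"
    and \<gamma>: "\<And>n. \<gamma> n \<ge> 0" "filterlim (\<lambda>N. \<Sum>n<N. \<gamma> n) at_top sequentially"
    and g: "summable g"
    and step: "\<And>\<epsilon>. \<epsilon> > 0 \<Longrightarrow> \<exists>\<kappa>>0. \<forall>n.
      q (Suc n) \<le> g n + max (a n) (max \<epsilon> ((1 + \<beta> n) * q n + \<beta> n - \<gamma> n * \<kappa>))"
  shows "q \<longlonglongrightarrow> 0"
proof -
  obtain \<kappa>1 where "\<kappa>1 > 0"
    and "\<And>n. q (Suc n) \<le> g n + max (a n) (max 1 ((1 + \<beta> n) * q n + \<beta> n - \<gamma> n * \<kappa>1))"
    using step[of 1] by auto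
  then have "q (Suc n) \<le> g n + max (a n) (max 1 ((1 + \<beta> n) * q n + \<beta> n))" for n
    using \<gamma>(1)[of n] by (smt (verit) mult_nonneg_nonneg)
  then obtain Q where Q: "\<And>n. q n \<le> Q"
    using perturbed_recursion_bounded[OF a \<beta> g] by blast
  show ?thesis
  proof (rule perturbed_descent_tendsto_zero[OF q a \<gamma>])
    show "summable (\<lambda>n. g n + (Q + 1) * \<beta> n)" using g \<beta>(2) by (intro summable_add summable_mult)
    fix \<epsilon> :: real assume "\<epsilon> > 0"
    then obtain \<kappa> where "\<kappa> > 0"
      and step_\<epsilon>: "\<And>n. q (Suc n) \<le> g n + max (a n) (max \<epsilon> ((1 + \<beta> n) * q n + \<beta> n - \<gamma> n * \<kappa>))"
      using step by blast
    have "q (Suc n) \<le> g n + (Q + 1) * \<beta> n + max (a n) (max \<epsilon> (q n - \<gamma> n * \<kappa>))" for n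
    proof -
      have "\<beta> n * (q n + 1) \<le> \<beta> n * (Q + 1)" using \<beta>(1)[of n] Q[of n] by (simp add: mult_left_mono)
      then have "(1 + \<beta> n) * q n + \<beta> n - \<gamma> n * \<kappa> \<le> (Q + 1) * \<beta> n + (q n - \<gamma> n * \<kappa>)"
        by (simp add: algebra_simps)
      moreover have "0 \<le> (Q + 1) * \<beta> n" using \<beta>(1)[of n] Q[of n] q[of n] by simp
      ultimately show ?thesis using step_\<epsilon>[of n] by linarith
    qed
    then show "\<exists>\<kappa>>0. \<forall>n. q (Suc n) \<le> g n + (Q + 1) * \<beta> n + max (a n) (max \<epsilon> (q n - \<gamma> n * \<kappa>))"
      using \<open>\<kappa> > 0\<close> by blast
  qed
qed

definition smooth_abs :: "real \<Rightarrow> real" where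
  "smooth_abs z = sqrt (1 + z\<^sup>2)"

lemma smooth_abs_ge_1: "smooth_abs z \<ge> 1"
  unfolding smooth_abs_def by simp

lemma smooth_abs_pos: "smooth_abs z > 0"
  using smooth_abs_ge_1[of z] by simp

lemma smooth_abs_square: "(smooth_abs z)\<^sup>2 = 1 + z\<^sup>2"
  unfolding smooth_abs_def by simp

lemma abs_le_smooth_abs: "\<bar>z\<bar> \<le> smooth_abs z"
  unfolding smooth_abs_def by (rule real_le_rsqrt) simp

lemma smooth_abs_le_1_plus_abs: "smooth_abs z \<le> 1 + \<bar>z\<bar>"
  unfolding smooth_abs_def by (rule real_le_lsqrt) (auto simp: power2_eq_square algebra_simps)

lemma smooth_abs_abs [simp]: "smooth_abs \<bar>z\<bar> = smooth_abs z"
  unfolding smooth_abs_def by simp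

lemma smooth_abs_mono: "\<bar>x\<bar> \<le> \<bar>y\<bar> \<Longrightarrow> smooth_abs x \<le> smooth_abs y"
  unfolding smooth_abs_def by (simp add: abs_le_square_iff)

lemma smooth_abs_scale_le:
  assumes "r \<ge> 1"
  shows "smooth_abs (r * v) \<le> r * smooth_abs v"
proof -
  have "1 \<le> r\<^sup>2" using assms by (simp add: one_le_power)
  then have "1 + (r * v)\<^sup>2 \<le> (r * smooth_abs v)\<^sup>2"
    by (simp add: power_mult_distrib smooth_abs_square algebra_simps)
  then show ?thesis
    using assms smooth_abs_pos[of v] unfolding smooth_abs_def[of "r * v"] by (intro real_le_lsqrt) auto
qed

lemma abs_slope_smooth_abs_le_1: "\<bar>z / smooth_abs z\<bar> \<le> 1"
  using abs_le_smooth_abs[of z] smooth_abs_pos[of z] by (simp add: abs_divide)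

lemma slope_smooth_abs_mono:
  assumes "0 \<le> x" "x \<le> y"
  shows "x / smooth_abs x \<le> y / smooth_abs y"
proof -
  have "(x * smooth_abs y)\<^sup>2 \<le> (y * smooth_abs x)\<^sup>2"
    using power_mono[OF assms(2,1)] by (simp add: power_mult_distrib smooth_abs_square algebra_simps)
  then have "x * smooth_abs y \<le> y * smooth_abs x"
    using assms smooth_abs_pos[of x] smooth_abs_pos[of y] by (simp add: power2_le_iff_abs_le)
  then show ?thesis
    using smooth_abs_pos[of x] smooth_abs_pos[of y] by (simp add: divide_le_eq le_divide_eq mult.commute)
qed

text \<open>The key inequality \<open>1 + s * y \<le> smooth_abs s * smooth_abs y\<close> is Cauchy--Schwarz
  for \<open>(1, s)\<close> and \<open>(1, y)\<close>.\<close>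

lemma smooth_abs_tangent_le: "smooth_abs s + s / smooth_abs s * h \<le> smooth_abs (s + h)"
proof -
  define y where "y = s + h"
  have "(1 + s * y)\<^sup>2 \<le> (1 + s\<^sup>2) * (1 + y\<^sup>2)"
    using zero_le_power2[of "s - y"] by (simp add: power2_eq_square algebra_simps)
  then have "1 + s * y \<le> smooth_abs s * smooth_abs y"
    unfolding smooth_abs_def real_sqrt_mult[symmetric] by (rule real_le_rsqrt)
  moreover have "smooth_abs s * (smooth_abs s + s / smooth_abs s * h) = 1 + s * y"
    using smooth_abs_pos[of s] smooth_abs_square[of s]
    unfolding y_def by (simp add: field_simps power2_eq_square)
  ultimately have "smooth_abs s * (smooth_abs s + s / smooth_abs s * h) \<le> smooth_abs s * smooth_abs (s + h)"
    unfolding y_def by simp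
  then show ?thesis using smooth_abs_pos[of s] by (rule mult_left_le_imp_le)
qed

lemma smooth_abs_add_le: "smooth_abs (t + w) \<le> smooth_abs t + t / smooth_abs t * w + w\<^sup>2 / 2"
proof -
  define A where "A = smooth_abs t"
  have A: "A \<ge> 1" "A\<^sup>2 = 1 + t\<^sup>2" unfolding A_def by (simp_all add: smooth_abs_ge_1 smooth_abs_square)
  define D where "D = t / A * w + w\<^sup>2 / (2 * A)"
  have AD: "2 * A * D = 2 * t * w + w\<^sup>2"
    using A(1) unfolding D_def by (simp add: field_simps power2_eq_square)
  have "(A + D)\<^sup>2 = A\<^sup>2 + 2 * A * D + D\<^sup>2" by (simp add: power2_eq_square algebra_simps)
  also have "\<dots> = 1 + (t + w)\<^sup>2 + D\<^sup>2" unfolding AD A(2) by (simp add: power2_eq_square algebra_simps)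
  finally have square_le: "1 + (t + w)\<^sup>2 \<le> (A + D)\<^sup>2" by simp
  have "2 * A * (A + D) = 2 * A\<^sup>2 + 2 * A * D" by (simp add: power2_eq_square algebra_simps)
  also have "\<dots> = 2 + (t + w)\<^sup>2 + t\<^sup>2" unfolding AD A(2) by (simp add: power2_eq_square algebra_simps)
  finally have "0 \<le> 2 * A * (A + D)" by (simp add: add_nonneg_nonneg)
  then have "A + D \<ge> 0" using A(1) by (simp add: zero_le_mult_iff)
  with square_le have "smooth_abs (t + w) \<le> A + D"
    unfolding smooth_abs_def by (rule real_le_lsqrt[rotated])
  also have "w\<^sup>2 / (2 * A) \<le> w\<^sup>2 / 2" using A(1) by (intro divide_left_mono) auto
  then have "A + D \<le> A + t / A * w + w\<^sup>2 / 2" unfolding D_def by simp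
  finally show ?thesis unfolding A_def .
qed

text \<open>Through \<open>smooth_abs\<close>, the contraction \<open>\<gamma>\<close> becomes a subtraction of at least
  \<open>\<gamma> * \<epsilon> / smooth_abs \<epsilon>\<close> as long as the bound exceeds \<open>\<epsilon>\<close>; the factor \<open>1 + \<beta>\<close>
  costs an additive \<open>\<beta>\<close> because \<open>smooth_abs 0 = 1\<close>.\<close>

lemma smooth_abs_contraction_step:
  assumes "\<alpha> \<ge> 0" "\<beta> \<ge> 0" "\<gamma> \<ge> 0" "\<epsilon> > 0"
    and t: "\<bar>t\<bar> \<le> max \<alpha> ((1 + \<beta>) * \<bar>v\<bar> - \<gamma>)"
  shows "smooth_abs t - 1 \<le> max (smooth_abs \<alpha> - 1)
    (max \<epsilon> ((1 + \<beta>) * (smooth_abs v - 1) + \<beta> - \<gamma> * (\<epsilon> / smooth_abs \<epsilon>)))"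
proof -
  define s where "s = (1 + \<beta>) * \<bar>v\<bar> - \<gamma>"
  consider "\<bar>t\<bar> \<le> \<alpha>" | "\<bar>t\<bar> \<le> s" "0 \<le> s" "s \<le> \<epsilon>" | "\<bar>t\<bar> \<le> s" "\<epsilon> < s"
    using t \<open>\<alpha> \<ge> 0\<close> unfolding s_def by fastforce
  then show ?thesis
  proof cases
    case 1
    then show ?thesis using smooth_abs_mono[of t \<alpha>] \<open>\<alpha> \<ge> 0\<close> by simp
  next
    case 2
    then have "smooth_abs t \<le> smooth_abs \<epsilon>" using \<open>\<epsilon> > 0\<close> by (intro smooth_abs_mono) auto
    also have "\<dots> \<le> 1 + \<epsilon>" using smooth_abs_le_1_plus_abs[of \<epsilon>] \<open>\<epsilon> > 0\<close> by simp
    finally show ?thesis by simp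
  next
    case 3
    have "smooth_abs s + s / smooth_abs s * \<gamma> \<le> smooth_abs ((1 + \<beta>) * \<bar>v\<bar>)"
      using smooth_abs_tangent_le[of s \<gamma>] unfolding s_def by simp
    also have "\<dots> \<le> (1 + \<beta>) * smooth_abs v"
      using smooth_abs_scale_le[of "1 + \<beta>" "\<bar>v\<bar>"] \<open>\<beta> \<ge> 0\<close> by simp
    finally have "smooth_abs s \<le> (1 + \<beta>) * smooth_abs v - \<gamma> * (s / smooth_abs s)"
      by (simp add: mult.commute)
    moreover have "\<gamma> * (\<epsilon> / smooth_abs \<epsilon>) \<le> \<gamma> * (s / smooth_abs s)"
      using slope_smooth_abs_mono[of \<epsilon> s] 3 \<open>\<epsilon> > 0\<close> \<open>\<gamma> \<ge> 0\<close> by (intro mult_left_mono) auto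
    moreover have "smooth_abs t \<le> smooth_abs s" using 3 by (intro smooth_abs_mono) auto
    ultimately show ?thesis by (simp add: algebra_simps)
  qed
qed

lemma perturbed_contraction_tendsto_zero:
  fixes x u w a \<beta> \<gamma> :: "nat \<Rightarrow> real"
  assumes rec: "\<And>k. x (Suc k) = u k + w k"
    and contraction: "\<And>k. \<bar>u k\<bar> \<le> max (a k) ((1 + \<beta> k) * \<bar>x k\<bar> - \<gamma> k)"
    and a: "\<And>k. a k \<ge> 0" "a \<longlonglongrightarrow> 0"
    and \<beta>: "\<And>k. \<beta> k \<ge> 0" "summable \<beta>"
    and \<gamma>: "\<And>k. \<gamma> k \<ge> 0" "filterlim (\<lambda>N. \<Sum>k<N. \<gamma> k) at_top sequentially"
    and noise: "summable (\<lambda>k. u k / smooth_abs (u k) * w k)" "summable (\<lambda>k. (w k)\<^sup>2)"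
  shows "x \<longlonglongrightarrow> 0"
proof -
  define q where "q k = smooth_abs (x k) - 1" for k
  define g where "g k = u k / smooth_abs (u k) * w k + (w k)\<^sup>2 / 2" for k
  have "q \<longlonglongrightarrow> 0"
  proof (rule perturbed_recursion_tendsto_zero[OF _ _ \<beta> \<gamma>])
    show "q k \<ge> 0" for k unfolding q_def using smooth_abs_ge_1 by simp
    have "(\<lambda>k. sqrt (1 + (a k)\<^sup>2) - 1) \<longlonglongrightarrow> sqrt (1 + 0\<^sup>2) - 1"
      by (intro tendsto_intros a(2))
    then show "(\<lambda>k. smooth_abs (a k) - 1) \<longlonglongrightarrow> 0" unfolding smooth_abs_def by simp
    show "summable g" unfolding g_def using noise by (intro summable_add summable_divide)
    fix \<epsilon> :: real assume "\<epsilon> > 0"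
    show "\<exists>\<kappa>>0. \<forall>k. q (Suc k) \<le> g k + max (smooth_abs (a k) - 1)
      (max \<epsilon> ((1 + \<beta> k) * q k + \<beta> k - \<gamma> k * \<kappa>))"
    proof (intro exI conjI allI)
      show "\<epsilon> / smooth_abs \<epsilon> > 0" using \<open>\<epsilon> > 0\<close> smooth_abs_pos[of \<epsilon>] by simp
      fix k
      have "q (Suc k) \<le> smooth_abs (u k) - 1 + g k"
        using smooth_abs_add_le[of "u k" "w k"] unfolding q_def g_def rec by simp
      moreover have "smooth_abs (u k) - 1 \<le> max (smooth_abs (a k) - 1)
          (max \<epsilon> ((1 + \<beta> k) * q k + \<beta> k - \<gamma> k * (\<epsilon> / smooth_abs \<epsilon>)))"
        unfolding q_def using a(1) \<beta>(1) \<gamma>(1) \<open>\<epsilon> > 0\<close> contraction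
        by (rule smooth_abs_contraction_step)
      ultimately show "q (Suc k) \<le> g k + max (smooth_abs (a k) - 1)
          (max \<epsilon> ((1 + \<beta> k) * q k + \<beta> k - \<gamma> k * (\<epsilon> / smooth_abs \<epsilon>)))"
        by simp
    qed
  qed
  then have "(\<lambda>k. sqrt (q k * (q k + 2))) \<longlonglongrightarrow> sqrt (0 * (0 + 2))"
    by (intro tendsto_intros)
  moreover have "sqrt (q k * (q k + 2)) = \<bar>x k\<bar>" for k
  proof -
    have "q k * (q k + 2) = (smooth_abs (x k))\<^sup>2 - 1"
      unfolding q_def by (simp add: power2_eq_square algebra_simps)
    then show ?thesis by (simp add: smooth_abs_square)
  qed
  ultimately show ?thesis by (simp add: tendsto_rabs_zero_iff)
qed

lemma square_integrable_add:
  fixes f g :: "'a \<Rightarrow> real"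
  assumes [measurable]: "f \<in> borel_measurable M" "g \<in> borel_measurable M"
    and "integrable M (\<lambda>x. (f x)\<^sup>2)" "integrable M (\<lambda>x. (g x)\<^sup>2)"
  shows "integrable M (\<lambda>x. (f x + g x)\<^sup>2)"
proof (rule Bochner_Integration.integrable_bound)
  show "integrable M (\<lambda>x. 2 * (f x)\<^sup>2 + 2 * (g x)\<^sup>2)" using assms(3,4) by auto
  have "(a + b)\<^sup>2 \<le> 2 * a\<^sup>2 + 2 * b\<^sup>2" for a b :: real
    using zero_le_power2[of "a - b"] by (simp add: power2_eq_square algebra_simps)
  then show "AE x in M. norm ((f x + g x)\<^sup>2) \<le> norm (2 * (f x)\<^sup>2 + 2 * (g x)\<^sup>2)" by simp
qed measurable

lemma square_integrable_mult_bounded: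
  fixes f h :: "'a \<Rightarrow> real"
  assumes [measurable]: "f \<in> borel_measurable M" "h \<in> borel_measurable M"
    and "integrable M (\<lambda>x. (f x)\<^sup>2)" and h: "\<And>x. \<bar>h x\<bar> \<le> 1"
  shows "integrable M (\<lambda>x. (h x * f x)\<^sup>2)"
proof (rule Bochner_Integration.integrable_bound)
  show "integrable M (\<lambda>x. (f x)\<^sup>2)" by fact
  have "(h x)\<^sup>2 * (f x)\<^sup>2 \<le> 1 * (f x)\<^sup>2" for x
    using h[of x] by (intro mult_right_mono) (auto simp: abs_le_square_iff[of _ 1, simplified])
  then show "AE x in M. norm ((h x * f x)\<^sup>2) \<le> norm ((f x)\<^sup>2)" by (simp add: power_mult_distrib)
qed measurable

lemma integrable_mult_of_square_integrable:
  fixes f g :: "'a \<Rightarrow> real"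
  assumes [measurable]: "f \<in> borel_measurable M" "g \<in> borel_measurable M"
    and "integrable M (\<lambda>x. (f x)\<^sup>2)" "integrable M (\<lambda>x. (g x)\<^sup>2)"
  shows "integrable M (\<lambda>x. f x * g x)"
proof (rule Bochner_Integration.integrable_bound)
  show "integrable M (\<lambda>x. (f x)\<^sup>2 + (g x)\<^sup>2)" using assms(3,4) by auto
  have "\<bar>a * b\<bar> \<le> a\<^sup>2 + b\<^sup>2" for a b :: real
  proof -
    have "2 * \<bar>a\<bar> * \<bar>b\<bar> \<le> a\<^sup>2 + b\<^sup>2"
      using zero_le_power2[of "\<bar>a\<bar> - \<bar>b\<bar>"] by (simp add: power2_eq_square algebra_simps)
    then show ?thesis
      unfolding abs_mult using mult_nonneg_nonneg[OF abs_ge_zero abs_ge_zero, of a b] by linarith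
  qed
  then show "AE x in M. norm (f x * g x) \<le> norm ((f x)\<^sup>2 + (g x)\<^sup>2)" by simp
qed measurable

locale martingale_transform = prob_space M for M :: "'a measure" +
  fixes G :: "nat \<Rightarrow> 'a measure" and V c :: "nat \<Rightarrow> 'a \<Rightarrow> real"
  assumes subalgebra: "\<And>k. subalgebra M (G k)"
    and filtration: "\<And>k l. k \<le> l \<Longrightarrow> sets (G k) \<subseteq> sets (G l)"
    and V_measurable: "\<And>k. V k \<in> borel_measurable (G (Suc k))"
    and V_square_integrable: "\<And>k. integrable M (\<lambda>x. (V k x)\<^sup>2)"
    and V_cond_exp: "\<And>k. AE x in M. real_cond_exp M (G k) (V k) x = 0"
    and c_measurable: "\<And>k. c k \<in> borel_measurable (G k)"
    and c_bounded: "\<And>k x. \<bar>c k x\<bar> \<le> 1"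
begin

lemma space_G: "space (G k) = space M"
  using subalgebra[of k] unfolding subalgebra_def by auto

lemma sets_G_subset: "sets (G k) \<subseteq> sets M"
  using subalgebra[of k] unfolding subalgebra_def by auto

lemma measurable_G_mono: "f \<in> borel_measurable (G k) \<Longrightarrow> k \<le> l \<Longrightarrow> f \<in> borel_measurable (G l)"
  by (rule measurable_from_subalg[of "G l" "G k"])
     (use filtration[of k l] space_G in \<open>auto simp: subalgebra_def\<close>)

lemma measurable_G_M: "f \<in> borel_measurable (G k) \<Longrightarrow> f \<in> borel_measurable M"
  using measurable_from_subalg[OF subalgebra] by blast

lemma V_measurable_M [measurable]: "V k \<in> borel_measurable M"
  using measurable_G_M[OF V_measurable] .

lemma c_measurable_M [measurable]: "c k \<in> borel_measurable M"
  using measurable_G_M[OF c_measurable] .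

lemma orthogonal_V:
  assumes g: "g \<in> borel_measurable (G k)" "integrable M (\<lambda>x. (g x)\<^sup>2)"
  shows "integrable M (\<lambda>x. g x * V k x)" "(\<integral>x. g x * V k x \<partial>M) = 0"
proof -
  have g_M [measurable]: "g \<in> borel_measurable M" using measurable_G_M[OF g(1)] .
  show int: "integrable M (\<lambda>x. g x * V k x)"
    by (rule integrable_mult_of_square_integrable[OF g_M _ g(2) V_square_integrable]) simp
  have "finite_measure_subalgebra M (G k)"
    using subalgebra[of k] by (simp add: finite_measure_subalgebra_def finite_measure_subalgebra_axioms_def)
  then interpret sigma_finite_subalgebra M "G k"
    by (rule finite_measure_subalgebra_is_sigma_finite)
  have "(\<integral>x. g x * V k x \<partial>M) = (\<integral>x. g x * real_cond_exp M (G k) (V k) x \<partial>M)"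
    using real_cond_exp_intg(2)[OF int g(1)] by simp
  also have "\<dots> = (\<integral>x. 0 \<partial>M)"
    by (rule integral_cong_AE) (use V_cond_exp[of k] in auto)
  finally show "(\<integral>x. g x * V k x \<partial>M) = 0" by simp
qed

definition transform_sum :: "nat \<Rightarrow> nat \<Rightarrow> 'a \<Rightarrow> real" where
  "transform_sum m n x = (\<Sum>k\<in>{m..<n}. c k x * V k x)"

lemma transform_sum_self [simp]: "transform_sum m m x = 0"
  unfolding transform_sum_def by simp

lemma transform_sum_Suc:
  "transform_sum m (m + Suc d) x = transform_sum m (m + d) x + c (m + d) x * V (m + d) x"
  unfolding transform_sum_def by simp

lemma increment_measurable: "(\<lambda>x. c k x * V k x) \<in> borel_measurable (G (Suc k))"
  using measurable_G_mono[OF c_measurable[of k], of "Suc k"] V_measurable[of k] by measurable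

lemma transform_sum_measurable: "transform_sum m n \<in> borel_measurable (G n)"
  unfolding transform_sum_def
  by (rule borel_measurable_sum) (auto intro: measurable_G_mono[OF increment_measurable])

lemma transform_sum_measurable_M [measurable]: "transform_sum m n \<in> borel_measurable M"
  using measurable_G_M[OF transform_sum_measurable] .

lemma increment_square_integrable: "integrable M (\<lambda>x. (c k x * V k x)\<^sup>2)"
  by (rule square_integrable_mult_bounded[OF V_measurable_M c_measurable_M V_square_integrable c_bounded])

lemma transform_sum_square_integrable: "integrable M (\<lambda>x. (transform_sum m (m + d) x)\<^sup>2)"
proof (induction d)
  case (Suc d)
  show ?case unfolding transform_sum_Suc
    by (rule square_integrable_add[OF _ _ Suc.IH increment_square_integrable]) measurable
qed simp

text \<open>Pythagoras for martingale transforms, localised to an event known at time \<open>m + d\<close>.\<close>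

lemma integral_indicator_transform_sum_Suc:
  assumes E: "E \<in> sets (G (m + d))"
  shows "(\<integral>x. indicator E x * (transform_sum m (m + Suc d) x)\<^sup>2 \<partial>M) =
    (\<integral>x. indicator E x * (transform_sum m (m + d) x)\<^sup>2 \<partial>M) +
    (\<integral>x. indicator E x * (c (m + d) x * V (m + d) x)\<^sup>2 \<partial>M)"
proof -
  let ?S = "transform_sum m (m + d)" and ?n = "m + d"
  have E_M [measurable]: "E \<in> sets M" using E sets_G_subset by blast
  define h where "h x = indicator E x * c ?n x * ?S x" for x
  have "h \<in> borel_measurable (G ?n)"
    using E c_measurable[of ?n] transform_sum_measurable[of m ?n] unfolding h_def by measurable
  moreover have "integrable M (\<lambda>x. (h x)\<^sup>2)"
  proof -
    have "\<bar>indicator E x * c ?n x\<bar> \<le> 1" for x using c_bounded[of ?n x] by (auto split: split_indicator)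
    then show ?thesis unfolding h_def
      by (intro square_integrable_mult_bounded transform_sum_square_integrable) measurable
  qed
  ultimately have cross: "integrable M (\<lambda>x. h x * V ?n x)" "(\<integral>x. h x * V ?n x \<partial>M) = 0"
    by (rule orthogonal_V)+
  have "indicator E x * (transform_sum m (m + Suc d) x)\<^sup>2 =
    indicator E x * (?S x)\<^sup>2 + 2 * (h x * V ?n x) + indicator E x * (c ?n x * V ?n x)\<^sup>2" for x
    unfolding transform_sum_Suc h_def by (simp add: power2_eq_square algebra_simps)
  then show ?thesis
    using cross integrable_mult_indicator[OF E_M transform_sum_square_integrable[of m d]]
      integrable_mult_indicator[OF E_M increment_square_integrable[of ?n]]
    by simp
qed

lemma transform_sum_second_moment_le:
  "(\<integral>x. (transform_sum m (m + d) x)\<^sup>2 \<partial>M) \<le> (\<Sum>k\<in>{m..<m + d}. \<integral>x. (V k x)\<^sup>2 \<partial>M)"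
proof (induction d)
  case (Suc d)
  have indicator_space: "(\<integral>x. indicator (space M) x * f x \<partial>M) = integral\<^sup>L M f" for f :: "'a \<Rightarrow> real"
    by (rule Bochner_Integration.integral_cong) auto
  have "(\<integral>x. (c (m + d) x * V (m + d) x)\<^sup>2 \<partial>M) \<le> (\<integral>x. (V (m + d) x)\<^sup>2 \<partial>M)"
  proof (rule integral_mono[OF increment_square_integrable V_square_integrable])
    fix x
    have "(c (m + d) x)\<^sup>2 * (V (m + d) x)\<^sup>2 \<le> 1 * (V (m + d) x)\<^sup>2"
      using c_bounded by (intro mult_right_mono) (auto simp: abs_le_square_iff[of _ 1, simplified])
    then show "(c (m + d) x * V (m + d) x)\<^sup>2 \<le> (V (m + d) x)\<^sup>2" by (simp add: power_mult_distrib)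
  qed
  then show ?case
    using Suc.IH integral_indicator_transform_sum_Suc[of "space M" m d] sets.top[of "G (m + d)"]
    by (simp add: space_G indicator_space)
qed simp

definition max_exceeds :: "nat \<Rightarrow> real \<Rightarrow> nat \<Rightarrow> 'a set" where
  "max_exceeds m l d = {x \<in> space M. \<exists>j\<le>d. l \<le> \<bar>transform_sum m (m + j) x\<bar>}"

lemma max_exceeds_sets_G: "max_exceeds m l d \<in> sets (G (m + d))"
proof -
  have "{x \<in> space (G (m + d)). \<exists>j\<in>{..d}. l \<le> \<bar>transform_sum m (m + j) x\<bar>} \<in> sets (G (m + d))"
  proof (rule sets.sets_Collect_finite_Ex)
    fix j assume "j \<in> {..d}"
    then have [measurable]: "transform_sum m (m + j) \<in> borel_measurable (G (m + d))"
      by (intro measurable_G_mono[OF transform_sum_measurable]) simp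
    show "{x \<in> space (G (m + d)). l \<le> \<bar>transform_sum m (m + j) x\<bar>} \<in> sets (G (m + d))"
      by measurable
  qed simp
  then show ?thesis unfolding max_exceeds_def by (simp only: space_G Bex_def atMost_iff)
qed

lemma max_exceeds_sets [measurable]: "max_exceeds m l d \<in> sets M"
  using max_exceeds_sets_G sets_G_subset by blast

lemma measure_max_exceeds_le_integral:
  assumes "l > 0"
  shows "l\<^sup>2 * measure M (max_exceeds m l d) \<le>
    (\<integral>x. indicator (max_exceeds m l d) x * (transform_sum m (m + d) x)\<^sup>2 \<partial>M)"
proof (induction d)
  case 0
  have "max_exceeds m l 0 = {}" unfolding max_exceeds_def using \<open>l > 0\<close> by auto
  then show ?case by simp
next
  case (Suc d)
  let ?S' = "transform_sum m (m + Suc d)" and ?B = "max_exceeds m l d"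
  define E where "E = max_exceeds m l (Suc d) - ?B"
  have B_subset: "?B \<subseteq> max_exceeds m l (Suc d)" unfolding max_exceeds_def using le_SucI by blast
  have E_sets [measurable]: "E \<in> sets M" unfolding E_def by measurable
  have "(\<integral>x. indicator ?B x * (c (m + d) x * V (m + d) x)\<^sup>2 \<partial>M) \<ge> 0"
    by (rule integral_nonneg_AE) auto
  then have "(\<integral>x. indicator ?B x * (?S' x)\<^sup>2 \<partial>M) \<ge> l\<^sup>2 * measure M ?B"
    using Suc.IH integral_indicator_transform_sum_Suc[OF max_exceeds_sets_G[of m l d]] by linarith
  moreover have "(\<integral>x. indicator E x * (?S' x)\<^sup>2 \<partial>M) \<ge> (\<integral>x. indicator E x * l\<^sup>2 \<partial>M)"
  proof (rule integral_mono)
    show "integrable M (\<lambda>x. indicator E x * (?S' x)\<^sup>2)"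
      using integrable_mult_indicator[OF E_sets transform_sum_square_integrable[of m "Suc d"]] by simp
    show "integrable M (\<lambda>x. indicator E x * l\<^sup>2)"
      by (simp add: integrable_real_indicator emeasure_eq_measure)
    fix x
    have "x \<in> E \<Longrightarrow> l \<le> \<bar>?S' x\<bar>" unfolding E_def max_exceeds_def by (auto simp: le_Suc_eq)
    then show "indicator E x * l\<^sup>2 \<le> indicator E x * (?S' x)\<^sup>2"
      using \<open>l > 0\<close> by (auto split: split_indicator simp: abs_le_square_iff[symmetric])
  qed
  moreover have "measure M (max_exceeds m l (Suc d)) = measure M ?B + measure M E"
    using B_subset finite_measure_Diff[of "max_exceeds m l (Suc d)" ?B] unfolding E_def by simp
  moreover have "(indicator (max_exceeds m l (Suc d)) x :: real) = indicator ?B x + indicator E x" for x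
    using B_subset unfolding E_def by (auto split: split_indicator)
  ultimately show ?case
    using integrable_mult_indicator[OF max_exceeds_sets[of m l d] transform_sum_square_integrable[of m "Suc d"]]
      integrable_mult_indicator[OF E_sets transform_sum_square_integrable[of m "Suc d"]]
    by (simp add: distrib_right distrib_left mult.commute[of "l\<^sup>2"])
qed

lemma kolmogorov_maximal_inequality:
  assumes "l > 0"
  shows "l\<^sup>2 * measure M (max_exceeds m l d) \<le> (\<Sum>k\<in>{m..<m + d}. \<integral>x. (V k x)\<^sup>2 \<partial>M)"
proof -
  have "l\<^sup>2 * measure M (max_exceeds m l d) \<le>
      (\<integral>x. indicator (max_exceeds m l d) x * (transform_sum m (m + d) x)\<^sup>2 \<partial>M)"
    by (rule measure_max_exceeds_le_integral[OF assms])
  also have "\<dots> \<le> (\<integral>x. (transform_sum m (m + d) x)\<^sup>2 \<partial>M)"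
    using integrable_mult_indicator[OF max_exceeds_sets transform_sum_square_integrable]
    by (intro integral_mono transform_sum_square_integrable) (auto split: split_indicator)
  also have "\<dots> \<le> (\<Sum>k\<in>{m..<m + d}. \<integral>x. (V k x)\<^sup>2 \<partial>M)"
    by (rule transform_sum_second_moment_le)
  finally show ?thesis .
qed

lemma measure_sup_transform_sum_le:
  assumes "l > 0" and summable: "summable (\<lambda>k. \<integral>x. (V k x)\<^sup>2 \<partial>M)"
  shows "measure M {x \<in> space M. \<exists>j. l \<le> \<bar>transform_sum m (m + j) x\<bar>} \<le>
    (\<Sum>k. \<integral>x. (V (k + m) x)\<^sup>2 \<partial>M) / l\<^sup>2"
proof -
  have "measure M (max_exceeds m l d) \<le> (\<Sum>k. \<integral>x. (V (k + m) x)\<^sup>2 \<partial>M) / l\<^sup>2" for d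
  proof -
    have "l\<^sup>2 * measure M (max_exceeds m l d) \<le> (\<Sum>k<d. \<integral>x. (V (k + m) x)\<^sup>2 \<partial>M)"
      using kolmogorov_maximal_inequality[OF \<open>l > 0\<close>, of m d]
      by (simp add: sum.atLeastLessThan_shift_bounds[of _ 0 m, simplified] add.commute atLeast0LessThan)
    also have "\<dots> \<le> (\<Sum>k. \<integral>x. (V (k + m) x)\<^sup>2 \<partial>M)"
      using summable_ignore_initial_segment[OF summable, of m] by (intro sum_le_suminf) auto
    finally show ?thesis using \<open>l > 0\<close> by (simp add: le_divide_eq mult.commute)
  qed
  moreover have "(\<lambda>d. measure M (max_exceeds m l d)) \<longlonglongrightarrow> measure M (\<Union>d. max_exceeds m l d)"
  proof (rule finite_Lim_measure_incseq)
    show "incseq (max_exceeds m l)" unfolding incseq_def max_exceeds_def using le_trans by blast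
  qed auto
  ultimately have "measure M (\<Union>d. max_exceeds m l d) \<le> (\<Sum>k. \<integral>x. (V (k + m) x)\<^sup>2 \<partial>M) / l\<^sup>2"
    by (intro LIMSEQ_le_const2) auto
  moreover have "(\<Union>d. max_exceeds m l d) = {x \<in> space M. \<exists>j. l \<le> \<bar>transform_sum m (m + j) x\<bar>}"
    unfolding max_exceeds_def by auto
  ultimately show ?thesis by simp
qed

lemma AE_summable_transform:
  assumes summable: "summable (\<lambda>k. \<integral>x. (V k x)\<^sup>2 \<partial>M)"
  shows "AE x in M. summable (\<lambda>k. c k x * V k x)"
proof -
  define bad where
    "bad j = {x \<in> space M. \<forall>m. \<exists>i. inverse (real (Suc j)) \<le> \<bar>transform_sum m (m + i) x\<bar>}" for j
  have "bad j \<in> null_sets M" for j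
  proof -
    let ?l = "inverse (real (Suc j))"
    define \<tau> where "\<tau> m = (\<Sum>k. \<integral>x. (V (k + m) x)\<^sup>2 \<partial>M)" for m
    have "measure M (bad j) \<le> \<tau> m / ?l\<^sup>2" for m
    proof -
      have "measure M (bad j) \<le> measure M {x \<in> space M. \<exists>i. ?l \<le> \<bar>transform_sum m (m + i) x\<bar>}"
        unfolding bad_def by (intro finite_measure_mono) auto
      also have "\<dots> \<le> \<tau> m / ?l\<^sup>2"
        unfolding \<tau>_def by (rule measure_sup_transform_sum_le[OF _ summable]) simp
      finally show ?thesis .
    qed
    moreover have "(\<lambda>m. \<tau> m / ?l\<^sup>2) \<longlonglongrightarrow> 0 / ?l\<^sup>2"
      unfolding \<tau>_def by (intro tendsto_intros suminf_exist_split2[OF summable]) simp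
    ultimately have "measure M (bad j) \<le> 0"
      using LIMSEQ_le_const by fastforce
    moreover have "bad j \<in> sets M" unfolding bad_def by measurable
    ultimately show ?thesis by (simp add: null_sets_def emeasure_eq_measure antisym)
  qed
  then have "AE x in M. \<forall>j. x \<notin> bad j"
    by (simp add: AE_all_countable AE_not_in)
  then show ?thesis
  proof (rule AE_mp[OF _ AE_I2], intro impI)
    fix x assume "x \<in> space M" and good: "\<forall>j. x \<notin> bad j"
    show "summable (\<lambda>k. c k x * V k x)"
      unfolding summable_Cauchy
    proof (intro allI impI)
      fix e :: real assume "e > 0"
      then obtain j where j: "inverse (real (Suc j)) < e / 2"
        using reals_Archimedean[of "e / 2"] by auto
      from good \<open>x \<in> space M\<close> obtain m where m: "\<And>i. \<bar>transform_sum m (m + i) x\<bar> < inverse (real (Suc j))"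
        unfolding bad_def by (auto simp: not_le)
      have "norm (\<Sum>k\<in>{m'..<n}. c k x * V k x) < e" if "m \<le> m'" for m' n
      proof (cases "n \<le> m'")
        case False
        then have "(\<Sum>k\<in>{m'..<n}. c k x * V k x) =
            transform_sum m (m + (n - m)) x - transform_sum m (m + (m' - m)) x"
          unfolding transform_sum_def using that sum_diff_nat_ivl[of m m' n "\<lambda>k. c k x * V k x"] by simp
        then show ?thesis using m[of "n - m"] m[of "m' - m"] j by (simp add: abs_diff_less_iff) linarith
      qed (use \<open>e > 0\<close> in simp)
      then show "\<exists>N. \<forall>m'\<ge>N. \<forall>n. norm (\<Sum>k\<in>{m'..<n}. c k x * V k x) < e" by blast
    qed
  qed
qed

end

context
  fixes M :: "'a measure" and f :: "nat \<Rightarrow> 'a \<Rightarrow> real"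
  assumes f_measurable [measurable]: "\<And>n. f n \<in> borel_measurable M"
    and f_nonneg: "\<And>n x. f n x \<ge> 0"
    and suminf_nn_integral_finite: "(\<Sum>n. \<integral>\<^sup>+ x. ennreal (f n x) \<partial>M) < \<infinity>"
begin

lemma integrable_of_suminf_nn_integral_finite: "integrable M (f n)"
  using ennreal_suminf_lessD[OF suminf_nn_integral_finite, of n] f_nonneg
  by (intro integrableI_nonneg) auto

lemma summable_integral_of_suminf_nn_integral_finite: "summable (\<lambda>n. \<integral>x. f n x \<partial>M)"
proof (rule summable_suminf_not_top)
  have "(\<integral>\<^sup>+ x. ennreal (f n x) \<partial>M) = ennreal (\<integral>x. f n x \<partial>M)" for n
    using integrable_of_suminf_nn_integral_finite f_nonneg by (intro nn_integral_eq_integral) auto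
  then show "(\<Sum>n. ennreal (\<integral>x. f n x \<partial>M)) \<noteq> \<top>"
    using suminf_nn_integral_finite by simp
qed (use f_nonneg in auto)

lemma AE_summable_of_suminf_nn_integral_finite: "AE x in M. summable (\<lambda>n. f n x)"
proof -
  have "(\<integral>\<^sup>+ x. (\<Sum>n. ennreal (f n x)) \<partial>M) \<noteq> \<infinity>"
    using suminf_nn_integral_finite by (subst nn_integral_suminf) auto
  then have "AE x in M. (\<Sum>n. ennreal (f n x)) \<noteq> \<infinity>"
    by (intro nn_integral_PInf_AE) auto
  then show ?thesis
    by (rule AE_mp[OF _ AE_I2]) (auto intro: summable_suminf_not_top f_nonneg)
qed

end

lemma measurable_comp_restrict:
  assumes "T \<in> borel_measurable (Pi\<^sub>M I (\<lambda>_. borel))" "\<And>i. i \<in> I \<Longrightarrow> X i \<in> borel_measurable N"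
  shows "(\<lambda>\<omega>. T (restrict (\<lambda>i. X i \<omega>) I)) \<in> borel_measurable N"
  using measurable_comp[OF measurable_restrict[OF assms(2)] assms(1)] by (simp add: comp_def)

theorem mainTheorem1:
  fixes M :: "'a measure"
    and F :: "nat \<Rightarrow> 'a measure"
    and X W :: "nat \<Rightarrow> 'a \<Rightarrow> real"
    and T :: "nat \<Rightarrow> (nat \<Rightarrow> real) \<Rightarrow> real"
    and \<alpha> \<beta> \<gamma> :: "nat \<Rightarrow> real"
    and xs :: real
  assumes "prob_space M"
    and sub: "\<And>n. n \<ge> 1 \<Longrightarrow> subalgebra M (F n)"
    and incr: "\<And>n m. 1 \<le> n \<Longrightarrow> n \<le> m \<Longrightarrow> sets (F n) \<subseteq> sets (F m)"
    and X_meas: "\<And>n. n \<ge> 1 \<Longrightarrow> X n \<in> borel_measurable (F n)"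
    and T_meas: "\<And>n. n \<ge> 1 \<Longrightarrow> T n \<in> borel_measurable (Pi\<^sub>M {1..n} (\<lambda>_. borel))"
    and W_meas: "\<And>n. n \<ge> 1 \<Longrightarrow> W n \<in> borel_measurable (F (Suc n))"
    and rec: "\<And>n \<omega>. n \<ge> 1 \<Longrightarrow> \<omega> \<in> space M \<Longrightarrow>
                X (Suc n) \<omega> = T n (restrict (\<lambda>i. X i \<omega>) {1..n}) + W n \<omega>"
    and W_cond: "\<And>n. n \<ge> 1 \<Longrightarrow> AE \<omega> in M. real_cond_exp M (F n) (W n) \<omega> = 0"
    and W_sq: "(\<Sum>n. \<integral>\<^sup>+ \<omega>. ennreal ((W (Suc n) \<omega>)\<^sup>2) \<partial>M) < \<infinity>"
    and \<alpha>_nonneg: "\<And>n. n \<ge> 1 \<Longrightarrow> \<alpha> n \<ge> 0"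
    and \<beta>_nonneg: "\<And>n. n \<ge> 1 \<Longrightarrow> \<beta> n \<ge> 0"
    and \<gamma>_nonneg: "\<And>n. n \<ge> 1 \<Longrightarrow> \<gamma> n \<ge> 0"
    and \<alpha>_lim: "\<alpha> \<longlonglongrightarrow> 0"
    and \<beta>_sum: "summable (\<lambda>n. \<beta> (Suc n))"
    and \<gamma>_sum: "filterlim (\<lambda>N. \<Sum>n=1..N. \<gamma> n) at_top sequentially"
    and T_bound: "\<And>n x. n \<ge> 1 \<Longrightarrow> x \<in> space (Pi\<^sub>M {1..n} (\<lambda>_. borel)) \<Longrightarrow>
                \<bar>T n x - xs\<bar> \<le> max (\<alpha> n) ((1 + \<beta> n) * \<bar>x n - xs\<bar> - \<gamma> n)"
  shows "AE \<omega> in M. (\<lambda>n. X n \<omega>) \<longlonglongrightarrow> xs"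
proof -
  interpret prob_space M by fact
  define u where "u n \<omega> = T n (restrict (\<lambda>i. X i \<omega>) {1..n}) - xs" for n \<omega>
  have u_measurable: "u n \<in> borel_measurable (F n)" if "n \<ge> 1" for n
  proof -
    have "X i \<in> borel_measurable (F n)" if "i \<in> {1..n}" for i
      using measurable_from_subalg[OF _ X_meas] sub that incr[of i n] by (auto simp: subalgebra_def)
    then show ?thesis
      using measurable_comp_restrict[OF T_meas[OF that]] unfolding u_def by measurable
  qed
  have W_measurable [measurable]: "W (Suc k) \<in> borel_measurable M" for k
    using measurable_from_subalg[OF sub W_meas] by simp
  interpret martingale_transform M "\<lambda>k. F (Suc k)" "\<lambda>k. W (Suc k)"
    "\<lambda>k \<omega>. u (Suc k) \<omega> / smooth_abs (u (Suc k) \<omega>)"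
  proof
    show "integrable M (\<lambda>\<omega>. (W (Suc k) \<omega>)\<^sup>2)" for k
      using integrable_of_suminf_nn_integral_finite[OF _ _ W_sq] by simp
    show "(\<lambda>\<omega>. u (Suc k) \<omega> / smooth_abs (u (Suc k) \<omega>)) \<in> borel_measurable (F (Suc k))" for k
      using u_measurable[of "Suc k"] unfolding smooth_abs_def by measurable
  qed (use sub incr W_meas W_cond abs_slope_smooth_abs_le_1 in auto)
  have "AE \<omega> in M. summable (\<lambda>k. u (Suc k) \<omega> / smooth_abs (u (Suc k) \<omega>) * W (Suc k) \<omega>)"
    using summable_integral_of_suminf_nn_integral_finite[OF _ _ W_sq]
    by (intro AE_summable_transform) auto
  moreover have "AE \<omega> in M. summable (\<lambda>k. (W (Suc k) \<omega>)\<^sup>2)"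
    using AE_summable_of_suminf_nn_integral_finite[OF _ _ W_sq] by auto
  ultimately show ?thesis
  proof (rule AE_mp[OF AE_conj_iff[THEN iffD2, OF conjI] AE_I2], safe)
    fix \<omega> assume "\<omega> \<in> space M"
    assume noise: "summable (\<lambda>k. u (Suc k) \<omega> / smooth_abs (u (Suc k) \<omega>) * W (Suc k) \<omega>)"
      "summable (\<lambda>k. (W (Suc k) \<omega>)\<^sup>2)"
    have "(\<lambda>k. X (Suc k) \<omega> - xs) \<longlonglongrightarrow> 0"
    proof (rule perturbed_contraction_tendsto_zero[OF _ _ _ _ _ \<beta>_sum _ _ noise])
      show "X (Suc (Suc k)) \<omega> - xs = u (Suc k) \<omega> + W (Suc k) \<omega>" for k
        using rec[of "Suc k" \<omega>] \<open>\<omega> \<in> space M\<close> unfolding u_def by simp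
      show "\<bar>u (Suc k) \<omega>\<bar> \<le> max (\<alpha> (Suc k)) ((1 + \<beta> (Suc k)) * \<bar>X (Suc k) \<omega> - xs\<bar> - \<gamma> (Suc k))" for k
        using T_bound[of "Suc k" "restrict (\<lambda>i. X i \<omega>) {1..Suc k}"] unfolding u_def by (simp add: space_PiM)
      show "(\<lambda>k. \<alpha> (Suc k)) \<longlonglongrightarrow> 0" using LIMSEQ_Suc[OF \<alpha>_lim] .
      show "filterlim (\<lambda>N. \<Sum>k<N. \<gamma> (Suc k)) at_top sequentially"
        using \<gamma>_sum by (simp add: sum.atLeast1_atMost_eq)
    qed (use \<alpha>_nonneg \<beta>_nonneg \<gamma>_nonneg in auto)
    then show "(\<lambda>n. X n \<omega>) \<longlonglongrightarrow> xs"
      by (simp add: LIMSEQ_imp_Suc LIM_zero_iff)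
  qed
qed

end
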